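(* Let $n,r$ be integers with $n\ge r+2\ge 2$. For each $i\in\{1,\dots,n-1\}$, the subgroup of $K$ generated by $x^{(i)}_1,\dots,x^{(i)}_r$ is a free group. The subgroup of $K$ generated by $x^{(1)}_1,x^{(2)}_2,\dots,x^{(r)}_r$ is a free group.
   Context: For $\alpha\in\{1,\dots,n\}$ let $F^{(\alpha)}$ be the free group on $a^{(\alpha)}_1,\dots,a^{(\alpha)}_r$, let $\psi\colon F^{(1)}\times\cdots\times F^{(n)}\to\mathbb Z^r$ send each $a^{(\alpha)}_j$ to the standard basis vector $e_j$, and $K=\ker\psi$. For $\alpha\in\{1,\dots,n-1\}$, $j\in\{1,\dots,r\}$, $x^{(\alpha)}_j=a^{(\alpha)}_j(a^{(n)}_j)^{-1}\in K$. *)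

theory Defs
  imports "HOL-Algebra.Algebra"
begin

text \<open>A word over an alphabet 'a is a list of letters (x, e); e = True means x, e = False means x^-1.
  A word is reduced if no letter is immediately followed by its inverse.\<close>

fun reduced_word :: "('a \<times> bool) list \<Rightarrow> bool" where
  "reduced_word [] = True"
| "reduced_word [_] = True"
| "reduced_word ((x, e) # (y, f) # ws) = (\<not> (x = y \<and> e \<noteq> f) \<and> reduced_word ((y, f) # ws))"

definition word_eval :: "('a, 'b) monoid_scheme \<Rightarrow> ('a \<times> bool) list \<Rightarrow> 'a" where
  "word_eval G ws = foldr (\<lambda>(x, e) acc. (if e then x else inv\<^bsub>G\<^esub> x) \<otimes>\<^bsub>G\<^esub> acc) ws \<one>\<^bsub>G\<^esub>"

definition free_basis :: "('a, 'b) monoid_scheme \<Rightarrow> 'a set \<Rightarrow> bool" where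
  "free_basis G B \<longleftrightarrow> B \<subseteq> carrier G \<and> generate G B = carrier G \<and>
     (\<forall>ws. ws \<noteq> [] \<and> set ws \<subseteq> B \<times> UNIV \<and> reduced_word ws \<longrightarrow> word_eval G ws \<noteq> \<one>\<^bsub>G\<^esub>)"

definition is_free_group :: "('a, 'b) monoid_scheme \<Rightarrow> bool" where
  "is_free_group G \<longleftrightarrow> group G \<and> (\<exists>B. free_basis G B)"

definition letter_inv :: "nat \<times> bool \<Rightarrow> nat \<times> bool" where
  "letter_inv l = (fst l, \<not> snd l)"

fun cons_red :: "nat \<times> bool \<Rightarrow> (nat \<times> bool) list \<Rightarrow> (nat \<times> bool) list" where
  "cons_red l [] = [l]"
| "cons_red l (m # ws) = (if m = letter_inv l then ws else l # m # ws)"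

definition word_mult :: "(nat \<times> bool) list \<Rightarrow> (nat \<times> bool) list \<Rightarrow> (nat \<times> bool) list" where
  "word_mult v w = foldr cons_red v w"

definition free_grp :: "nat \<Rightarrow> (nat \<times> bool) list monoid" where
  "free_grp r = \<lparr>carrier = {w. set w \<subseteq> {1..r} \<times> UNIV \<and> reduced_word w},
                 monoid.mult = word_mult, one = []\<rparr>"

definition FP :: "nat \<Rightarrow> nat \<Rightarrow> (nat \<Rightarrow> (nat \<times> bool) list) monoid" where
  "FP n r = product_group {1..n} (\<lambda>_. free_grp r)"

definition gen_a :: "nat \<Rightarrow> nat \<Rightarrow> nat \<Rightarrow> (nat \<Rightarrow> (nat \<times> bool) list)" where
  "gen_a n alpha j = (\<lambda>beta\<in>{1..n}. if beta = alpha then [(j, True)] else [])"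

definition exp_sum :: "nat \<Rightarrow> (nat \<times> bool) list \<Rightarrow> int" where
  "exp_sum j w = (\<Sum>l\<leftarrow>w. if fst l = j then (if snd l then 1 else -1) else 0)"

text \<open>psi : F^(1) x ... x F^(n) -> Z^r, a^(alpha)_j |-> e_j; elements of Z^r as functions {1..r} -> int.\<close>
definition psi :: "nat \<Rightarrow> nat \<Rightarrow> (nat \<Rightarrow> (nat \<times> bool) list) \<Rightarrow> nat \<Rightarrow> int" where
  "psi n r g = (\<lambda>j\<in>{1..r}. \<Sum>alpha\<in>{1..n}. exp_sum j (g alpha))"

definition Kset :: "nat \<Rightarrow> nat \<Rightarrow> (nat \<Rightarrow> (nat \<times> bool) list) set" where
  "Kset n r = {g \<in> carrier (FP n r). psi n r g = (\<lambda>j\<in>{1..r}. 0)}"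

definition Kgrp :: "nat \<Rightarrow> nat \<Rightarrow> (nat \<Rightarrow> (nat \<times> bool) list) monoid" where
  "Kgrp n r = (FP n r)\<lparr>carrier := Kset n r\<rparr>"

definition gen_x :: "nat \<Rightarrow> nat \<Rightarrow> nat \<Rightarrow> nat \<Rightarrow> (nat \<Rightarrow> (nat \<times> bool) list)" where
  "gen_x n r alpha j = gen_a n alpha j \<otimes>\<^bsub>FP n r\<^esub> inv\<^bsub>FP n r\<^esub> (gen_a n n j)"

end

theory Submission
  imports Defs
begin

text \<open>Projecting K onto its i-th factor sends x(i,j) to the generator a(j) of F(r), and projecting
  it onto its n-th factor sends x(i,i) to a(i)\<inverse>. Both image families are free bases of F(r),
  and a family whose image under a homomorphism is freely independent (and injectively so) is itself
  freely independent: a nontrivial reduced word in it cannot evaluate to 1 because its image does not.\<close>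

section \<open>Reduced words form a group\<close>

lemma reduced_word_ConsD: "reduced_word (l # w) \<Longrightarrow> reduced_word w"
  by (cases l; cases w) auto

lemma reduced_word_map:
  assumes "reduced_word ws" "set ws \<subseteq> S \<times> UNIV" "inj_on \<phi> S" "inj \<sigma>"
  shows "reduced_word (map (\<lambda>(x, e). (\<phi> x, \<sigma> e)) ws)"
  using assms
proof (induction ws rule: reduced_word.induct)
  case (3 x e y f ws)
  then have "\<not> (\<phi> x = \<phi> y \<and> \<sigma> e \<noteq> \<sigma> f)"
    by (auto dest: inj_onD)
  with 3 show ?case by auto
qed auto

lemma letter_inv_inv [simp]: "letter_inv (letter_inv l) = l"
  by (simp add: letter_inv_def)

lemma cons_red_reduced: "reduced_word w \<Longrightarrow> reduced_word (cons_red l w)"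
proof (cases w)
  case (Cons m ws)
  assume "reduced_word w"
  with Cons show ?thesis
    by (cases l; cases m) (auto simp: letter_inv_def intro: reduced_word_ConsD)
qed simp

lemma cons_red_set: "set (cons_red l w) \<subseteq> insert l (set w)"
  by (cases w) auto

lemma cons_red_cancel: "reduced_word w \<Longrightarrow> cons_red l (cons_red (letter_inv l) w) = w"
proof (cases w)
  case (Cons m ws)
  assume "reduced_word w"
  with Cons show ?thesis
    by (cases "m = l"; cases ws; cases l) (auto simp: letter_inv_def)
qed (simp add: letter_inv_def)

lemma word_mult_Nil [simp]: "word_mult [] w = w"
  by (simp add: word_mult_def)

lemma word_mult_Cons [simp]: "word_mult (l # v) w = cons_red l (word_mult v w)"
  by (simp add: word_mult_def)

lemma word_mult_append: "word_mult (u @ v) w = word_mult u (word_mult v w)"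
  by (simp add: word_mult_def)

lemma word_mult_reduced: "reduced_word w \<Longrightarrow> reduced_word (word_mult v w)"
  by (induction v) (auto intro: cons_red_reduced)

lemma word_mult_set: "set v \<subseteq> A \<Longrightarrow> set w \<subseteq> A \<Longrightarrow> set (word_mult v w) \<subseteq> A"
  by (induction v) (use cons_red_set in fastforce)+

lemma word_mult_reduced_Nil: "reduced_word w \<Longrightarrow> word_mult w [] = w"
proof (induction w)
  case (Cons l w)
  then have IH: "word_mult w [] = w"
    using reduced_word_ConsD by blast
  show ?case
  proof (cases w)
    case (Cons m ws)
    with \<open>reduced_word (l # w)\<close> have "m \<noteq> letter_inv l"
      by (cases l; cases m) (auto simp: letter_inv_def)
    with IH Cons show ?thesis by simp
  qed simp
qed simp

lemma word_mult_cons_red: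
  assumes "reduced_word w"
  shows "word_mult (cons_red l v) w = cons_red l (word_mult v w)"
proof (cases v)
  case (Cons m vs)
  then show ?thesis
    using cons_red_cancel[OF word_mult_reduced[OF assms], of l vs] by auto
qed simp

lemma word_mult_assoc:
  "reduced_word w \<Longrightarrow> word_mult (word_mult u v) w = word_mult u (word_mult v w)"
  by (induction u) (simp_all add: word_mult_cons_red)

lemma word_mult_rev_inv: "word_mult (rev (map letter_inv u)) u = []"
proof (induction u)
  case (Cons l u)
  have "word_mult (rev (map letter_inv (l # u))) (l # u)
        = word_mult (rev (map letter_inv u)) (cons_red (letter_inv l) (l # u))"
    by (simp add: word_mult_append)
  with Cons show ?case by simp
qed simp

lemma group_free_grp: "group (free_grp r)"
proof (rule groupI)
  fix x y assume "x \<in> carrier (free_grp r)" "y \<in> carrier (free_grp r)"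
  then show "x \<otimes>\<^bsub>free_grp r\<^esub> y \<in> carrier (free_grp r)"
    using word_mult_set[of x "{1..r} \<times> UNIV" y]
    by (auto simp: free_grp_def intro: word_mult_reduced)
next
  fix x assume x: "x \<in> carrier (free_grp r)"
  define y where "y = word_mult (rev (map letter_inv x)) []"
  have "set (rev (map letter_inv x)) \<subseteq> {1..r} \<times> UNIV"
    using x by (auto simp: free_grp_def letter_inv_def)
  then have "set y \<subseteq> {1..r} \<times> UNIV"
    unfolding y_def by (intro word_mult_set) auto
  then have "y \<in> carrier (free_grp r)"
    unfolding free_grp_def by (auto simp: y_def intro: word_mult_reduced)
  moreover have "y \<otimes>\<^bsub>free_grp r\<^esub> x = \<one>\<^bsub>free_grp r\<^esub>"
    using x by (simp add: free_grp_def y_def word_mult_assoc word_mult_rev_inv)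
  ultimately show "\<exists>y\<in>carrier (free_grp r). y \<otimes>\<^bsub>free_grp r\<^esub> x = \<one>\<^bsub>free_grp r\<^esub>"
    by blast
qed (auto simp: free_grp_def word_mult_assoc)

lemma free_grp_inv_letter:
  assumes "k \<in> {1..r}"
  shows "inv\<^bsub>free_grp r\<^esub> [(k, e)] = [(k, \<not> e)]"
  using assms
  by (intro group.inv_equality[OF group_free_grp]) (auto simp: free_grp_def letter_inv_def)

lemma free_grp_inv_Nil: "inv\<^bsub>free_grp r\<^esub> [] = []"
  using monoid.inv_one[OF group.is_monoid[OF group_free_grp], of r]
  by (simp add: free_grp_def)

section \<open>Freely independent families\<close>

definition freely_independent :: "('a, 'b) monoid_scheme \<Rightarrow> 'a set \<Rightarrow> bool" where
  "freely_independent G S \<longleftrightarrow> S \<subseteq> carrier G \<and>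
     (\<forall>ws. ws \<noteq> [] \<and> set ws \<subseteq> S \<times> UNIV \<and> reduced_word ws \<longrightarrow> word_eval G ws \<noteq> \<one>\<^bsub>G\<^esub>)"

lemma word_eval_Nil [simp]: "word_eval G [] = \<one>\<^bsub>G\<^esub>"
  by (simp add: word_eval_def)

lemma word_eval_Cons [simp]:
  "word_eval G ((x, e) # ws) = (if e then x else inv\<^bsub>G\<^esub> x) \<otimes>\<^bsub>G\<^esub> word_eval G ws"
  by (simp add: word_eval_def)

lemma word_eval_carrier:
  "group G \<Longrightarrow> set ws \<subseteq> carrier G \<times> UNIV \<Longrightarrow> word_eval G ws \<in> carrier G"
  by (induction ws) (auto simp: group.is_monoid monoid.m_closed group.inv_closed)

lemma word_eval_hom:
  assumes "group G" "group H" "h \<in> hom G H" "set ws \<subseteq> carrier G \<times> UNIV"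
  shows "h (word_eval G ws) = word_eval H (map (\<lambda>(x, e). (h x, e)) ws)"
  using assms(4)
proof (induction ws)
  case Nil
  show ?case using assms by (simp add: hom_one)
next
  case (Cons a ws)
  obtain x e where a: "a = (x, e)" by force
  with Cons.prems have x: "x \<in> carrier G" by auto
  interpret group_hom G H h using assms by (simp add: group_hom_def group_hom_axioms_def)
  show ?case
    using Cons x word_eval_carrier[OF assms(1), of ws] by (auto simp: a)
qed

lemma word_eval_subgroup_generated:
  assumes "group G" "set ws \<subseteq> carrier (subgroup_generated G S) \<times> UNIV"
  shows "word_eval (subgroup_generated G S) ws = word_eval G ws"
  using assms(2) by (induction ws) (auto simp: group.inv_subgroup_generated[OF assms(1)])

lemma freely_independent_free_basis:
  assumes "group G" "freely_independent G S"
  shows "free_basis (subgroup_generated G S) S"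
proof -
  have S: "S \<subseteq> carrier (subgroup_generated G S)"
    using assms by (simp add: freely_independent_def group.subgroup_generated_subset_carrier_subset)
  have "generate (subgroup_generated G S) S = carrier (subgroup_generated G S)"
    using group.subgroup_generated2[OF assms(1), of S] S
    by (metis carrier_subgroup_generated inf.absorb2)
  moreover have "word_eval (subgroup_generated G S) ws = word_eval G ws"
    if "set ws \<subseteq> S \<times> UNIV" for ws
    using that S by (intro word_eval_subgroup_generated[OF assms(1)]) auto
  ultimately show ?thesis
    using assms(2) S by (auto simp: free_basis_def freely_independent_def)
qed

lemma is_free_group_subgroup_generated:
  "group G \<Longrightarrow> freely_independent G S \<Longrightarrow> is_free_group (subgroup_generated G S)"
  by (auto simp: is_free_group_def group.group_subgroup_generated
      intro: freely_independent_free_basis)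

lemma freely_independent_hom_image:
  assumes "group G" "group H" "h \<in> hom G H" "S \<subseteq> carrier G" "inj_on h S"
    and "freely_independent H (h ` S)"
  shows "freely_independent G S"
  unfolding freely_independent_def
proof (intro conjI allI impI notI assms(4))
  fix ws assume ws: "ws \<noteq> [] \<and> set ws \<subseteq> S \<times> UNIV \<and> reduced_word ws"
    and one: "word_eval G ws = \<one>\<^bsub>G\<^esub>"
  let ?hws = "map (\<lambda>(x, e). (h x, e)) ws"
  have "set ws \<subseteq> carrier G \<times> UNIV"
    using ws assms(4) by blast
  then have "word_eval H ?hws = h (word_eval G ws)"
    using word_eval_hom[OF assms(1-3)] by simp
  also have "\<dots> = \<one>\<^bsub>H\<^esub>"
    using one hom_one[OF assms(3,1,2)] by simp
  moreover have "reduced_word ?hws"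
    using reduced_word_map[of ws S h id] ws assms(5) by simp
  moreover have "set ?hws \<subseteq> h ` S \<times> UNIV"
    using ws by auto
  ultimately show False
    using assms(6) ws by (auto simp: freely_independent_def)
qed

lemma word_eval_free_grp_letters:
  assumes "set ws \<subseteq> (\<lambda>k. [(k, s)]) ` {1..r} \<times> UNIV"
  shows "word_eval (free_grp r) ws = word_mult (map (\<lambda>(x, e). (fst (hd x), e = s)) ws) []"
  using assms
proof (induction ws)
  case (Cons a ws)
  then obtain k e where "a = ([(k, s)], e)" "k \<in> {1..r}" by auto
  with Cons show ?case
    by (auto simp: free_grp_inv_letter) (simp_all add: free_grp_def)
qed (simp add: free_grp_def)

lemma freely_independent_free_grp_letters:
  "freely_independent (free_grp r) ((\<lambda>k. [(k, s)]) ` {1..r})"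
  unfolding freely_independent_def
proof (intro conjI allI impI)
  show "(\<lambda>k. [(k, s)]) ` {1..r} \<subseteq> carrier (free_grp r)"
    by (auto simp: free_grp_def)
next
  fix ws assume ws: "ws \<noteq> [] \<and> set ws \<subseteq> (\<lambda>k. [(k, s)]) ` {1..r} \<times> UNIV \<and> reduced_word ws"
  let ?w = "map (\<lambda>(x, e). (fst (hd x), e = s)) ws"
  have "inj_on (\<lambda>x. fst (hd x)) ((\<lambda>k. [(k, s)]) ` {1..r})" "inj (\<lambda>e. e = s)"
    by (auto simp: inj_on_def)
  then have "reduced_word ?w"
    using ws reduced_word_map by blast
  then have "word_eval (free_grp r) ws = ?w"
    using ws word_eval_free_grp_letters word_mult_reduced_Nil by metis
  then show "word_eval (free_grp r) ws \<noteq> \<one>\<^bsub>free_grp r\<^esub>"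
    using ws by (simp add: free_grp_def)
qed

section \<open>The kernel K and the elements x\<close>

lemma group_FP: "group (FP n r)"
  by (simp add: FP_def group_free_grp)

lemma FP_apply_hom: "c \<in> {1..n} \<Longrightarrow> (\<lambda>g. g c) \<in> hom (FP n r) (free_grp r)"
  by (auto simp: hom_def FP_def)

lemma FP_mult_apply:
  "c \<in> {1..n} \<Longrightarrow> (g \<otimes>\<^bsub>FP n r\<^esub> h) c = word_mult (g c) (h c)"
  by (simp add: FP_def free_grp_def)

lemma FP_inv_apply:
  "g \<in> carrier (FP n r) \<Longrightarrow> c \<in> {1..n} \<Longrightarrow> (inv\<^bsub>FP n r\<^esub> g) c = inv\<^bsub>free_grp r\<^esub> (g c)"
  by (simp add: FP_def group_free_grp)

lemma exp_sum_Nil [simp]: "exp_sum j [] = 0"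
  by (simp add: exp_sum_def)

lemma exp_sum_Cons [simp]:
  "exp_sum j (l # w) = (if fst l = j then if snd l then 1 else -1 else 0) + exp_sum j w"
  by (simp add: exp_sum_def)

lemma exp_sum_cons_red: "exp_sum j (cons_red l w) = exp_sum j [l] + exp_sum j w"
  by (cases w) (auto simp: letter_inv_def)

lemma exp_sum_word_mult: "exp_sum j (word_mult v w) = exp_sum j v + exp_sum j w"
  by (induction v) (simp_all add: exp_sum_cons_red)

lemma exp_sum_inv:
  assumes "w \<in> carrier (free_grp r)"
  shows "exp_sum j (inv\<^bsub>free_grp r\<^esub> w) = - exp_sum j w"
proof -
  have "word_mult (inv\<^bsub>free_grp r\<^esub> w) w = []"
    using group.l_inv[OF group_free_grp assms] by (simp add: free_grp_def)
  then show ?thesis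
    using exp_sum_word_mult[of j "inv\<^bsub>free_grp r\<^esub> w" w] by simp
qed

lemma Kset_iff: "g \<in> Kset n r \<longleftrightarrow> g \<in> carrier (FP n r) \<and>
   (\<forall>j\<in>{1..r}. (\<Sum>c\<in>{1..n}. exp_sum j (g c)) = 0)"
  unfolding Kset_def psi_def
  by (auto simp: fun_eq_iff restrict_def split: if_splits)

lemma subgroup_Kset: "subgroup (Kset n r) (FP n r)"
proof (rule group.subgroupI[OF group_FP])
  show "Kset n r \<subseteq> carrier (FP n r)"
    by (auto simp: Kset_iff)
  have "\<one>\<^bsub>FP n r\<^esub> \<in> Kset n r"
    by (auto simp: Kset_iff FP_def free_grp_def)
  then show "Kset n r \<noteq> {}"
    by blast
next
  fix g assume g: "g \<in> Kset n r"
  then have "g \<in> carrier (FP n r)"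
    by (simp add: Kset_iff)
  moreover have "g c \<in> carrier (free_grp r)" if "c \<in> {1..n}" for c
    using g that by (auto simp: Kset_iff FP_def)
  ultimately show "inv\<^bsub>FP n r\<^esub> g \<in> Kset n r"
    using g group.inv_closed[OF group_FP]
    by (simp add: Kset_iff FP_inv_apply exp_sum_inv sum_negf)
next
  fix g h assume gh: "g \<in> Kset n r" "h \<in> Kset n r"
  have "(\<Sum>c\<in>{1..n}. exp_sum j ((g \<otimes>\<^bsub>FP n r\<^esub> h) c)) =
    (\<Sum>c\<in>{1..n}. exp_sum j (g c)) + (\<Sum>c\<in>{1..n}. exp_sum j (h c))" for j
    unfolding sum.distrib[symmetric]
    by (intro sum.cong) (simp_all add: FP_mult_apply exp_sum_word_mult)
  with gh show "g \<otimes>\<^bsub>FP n r\<^esub> h \<in> Kset n r"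
    using group.is_monoid[OF group_FP] by (simp add: Kset_iff monoid.m_closed)
qed

lemma group_Kgrp: "group (Kgrp n r)"
  unfolding Kgrp_def by (rule group.subgroup_imp_group[OF group_FP subgroup_Kset])

lemma Kgrp_apply_hom: "c \<in> {1..n} \<Longrightarrow> (\<lambda>g. g c) \<in> hom (Kgrp n r) (free_grp r)"
  using FP_apply_hom[of c n r] subgroup.subset[OF subgroup_Kset, of n r]
  by (fastforce simp: hom_def Kgrp_def)

lemma gen_a_carrier: "j \<in> {1..r} \<Longrightarrow> gen_a n \<alpha> j \<in> carrier (FP n r)"
  by (auto simp: gen_a_def FP_def free_grp_def)

lemma gen_x_apply:
  assumes "c \<in> {1..n}" "\<alpha> \<noteq> n" "j \<in> {1..r}"
  shows "gen_x n r \<alpha> j c = (if c = \<alpha> then [(j, True)] else if c = n then [(j, False)] else [])"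
proof -
  have "(inv\<^bsub>FP n r\<^esub> gen_a n n j) c = (if c = n then [(j, False)] else [])"
    using assms by (simp add: FP_inv_apply gen_a_carrier)
      (auto simp: gen_a_def free_grp_inv_letter free_grp_inv_Nil)
  with assms show ?thesis
    by (auto simp: gen_x_def FP_mult_apply gen_a_def)
qed

lemma gen_x_in_Kset:
  assumes "\<alpha> \<in> {1..n}" "\<alpha> \<noteq> n" "j \<in> {1..r}"
  shows "gen_x n r \<alpha> j \<in> Kset n r"
proof -
  have "gen_x n r \<alpha> j \<in> carrier (FP n r)"
    unfolding gen_x_def using assms gen_a_carrier group_FP
    by (meson group.inv_closed group.is_monoid monoid.m_closed)
  moreover have "(\<Sum>c\<in>{1..n}. exp_sum j' (gen_x n r \<alpha> j c)) = 0" for j'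
  proof -
    have "(\<Sum>c\<in>{1..n}. exp_sum j' (gen_x n r \<alpha> j c)) =
      (\<Sum>c\<in>{1..n}. (if c = \<alpha> then exp_sum j' [(j, True)] else 0) +
                    (if c = n then exp_sum j' [(j, False)] else 0))"
      using assms by (intro sum.cong) (auto simp: gen_x_apply)
    also have "\<dots> = 0"
      using assms by (simp add: sum.distrib)
    finally show ?thesis .
  qed
  ultimately show ?thesis
    by (simp add: Kset_iff)
qed

lemma is_free_group_Kgrp_subgroup_generated:
  assumes "c \<in> {1..n}" "\<And>j. j \<in> {1..r} \<Longrightarrow> g j \<in> Kset n r \<and> g j c = [(j, s)]"
  shows "is_free_group (subgroup_generated (Kgrp n r) (g ` {1..r}))"
proof -
  let ?h = "\<lambda>x. x c"
  have "g ` {1..r} \<subseteq> carrier (Kgrp n r)"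
    using assms(2) by (auto simp: Kgrp_def)
  moreover have "inj_on ?h (g ` {1..r})"
    using assms(2) by (auto simp: inj_on_def)
  moreover have "?h ` g ` {1..r} = (\<lambda>k. [(k, s)]) ` {1..r}"
    using assms(2) by (force simp: image_image)
  ultimately have "freely_independent (Kgrp n r) (g ` {1..r})"
    using freely_independent_hom_image[OF group_Kgrp group_free_grp Kgrp_apply_hom[OF assms(1)]]
      freely_independent_free_grp_letters by metis
  then show ?thesis
    by (rule is_free_group_subgroup_generated[OF group_Kgrp])
qed

theorem lemma3p1:
  fixes n r :: nat
  assumes "n \<ge> r + 2"
  shows "(\<forall>i\<in>{1..n-1}. is_free_group
            (subgroup_generated (Kgrp n r) ((\<lambda>j. gen_x n r i j) ` {1..r})))
       \<and> is_free_group (subgroup_generated (Kgrp n r) ((\<lambda>i. gen_x n r i i) ` {1..r}))"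
proof (intro conjI ballI)
  fix i assume "i \<in> {1..n-1}"
  then have "i \<in> {1..n}" "i \<noteq> n"
    by auto
  then show "is_free_group (subgroup_generated (Kgrp n r) ((\<lambda>j. gen_x n r i j) ` {1..r}))"
    by (intro is_free_group_Kgrp_subgroup_generated[where c = i and s = True])
       (simp_all add: gen_x_in_Kset gen_x_apply)
next
  from assms have "r < n" "n \<in> {1..n}"
    by simp_all
  then show "is_free_group (subgroup_generated (Kgrp n r) ((\<lambda>i. gen_x n r i i) ` {1..r}))"
    by (intro is_free_group_Kgrp_subgroup_generated[where c = n and s = False])
       (simp_all add: gen_x_in_Kset gen_x_apply)
qed

end
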